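(* For every pair of nonnegative integers $(p,q)$ with $p\leq q$ there exists a positive integer $n$ with $\nu(n)=p$ and $e(n)=q$. Equivalently, the map $\Phi:\mathbb{N}_{+}\to\{(a,b)\in\mathbb{N}\times\mathbb{N}:\;a\leq b\}$, $\Phi(n)=(d(n),e(n))$, is well defined and surjective.
   Context: The Stern polynomials $B_n(t)\in\mathbb{Z}[t]$ are defined by $B_0(t)=0$, $B_1(t)=1$, and for $n\geq 1$: $B_{2n}(t)=tB_n(t)$, $B_{2n+1}(t)=B_n(t)+B_{n+1}(t)$. For $n\geq 1$ let $e(n)=\deg B_n(t)$, $d(n)=\operatorname{ord}_{t=0}B_n(t)$ (the largest $k$ with $t^k\mid B_n(t)$), and $\nu(n)=\max\{k:\;2^k\mid n\}$. *)

theory Defs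
  imports "HOL-Computational_Algebra.Polynomial" "HOL-Computational_Algebra.Primes"
begin

text \<open>Stern polynomials: B 0 = 0, B 1 = 1, B (2n) = t B n, B (2n+1) = B n + B (n+1).\<close>
function stern_poly :: "nat \<Rightarrow> int poly" where
  "stern_poly 0 = 0"
| "stern_poly (Suc 0) = 1"
| "stern_poly (Suc (Suc m)) =
     (if even m then [:0, 1:] * stern_poly (Suc (m div 2))
      else stern_poly (Suc (m div 2)) + stern_poly (Suc (Suc (m div 2))))"
  by pat_completeness auto
termination
  by (relation "measure id") (auto elim: oddE)

definition stern_e :: "nat \<Rightarrow> nat" where "stern_e n = degree (stern_poly n)"
definition stern_d :: "nat \<Rightarrow> nat" where "stern_d n = order 0 (stern_poly n)"
definition nu :: "nat \<Rightarrow> nat" where "nu n = multiplicity (2::nat) n"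

lemma stern_poly_even: "n \<ge> 1 \<Longrightarrow> stern_poly (2*n) = [:0,1:] * stern_poly n"
proof -
  assume "n \<ge> 1" then obtain k where k: "n = Suc k" by (cases n) auto
  have "2*n = Suc (Suc (2*k))" using k by simp
  then show ?thesis using k by simp
qed

lemma stern_poly_odd: "n \<ge> 1 \<Longrightarrow> stern_poly (2*n+1) = stern_poly n + stern_poly (n+1)"
proof -
  assume "n \<ge> 1" then obtain k where k: "n = Suc k" by (cases n) auto
  have "2*n+1 = Suc (Suc (2*k+1))" using k by simp
  then show ?thesis using k by simp
qed

end

theory Submission
  imports Defs
begin

(* Both surjectivity statements are witnessed by the same explicit family
     n = 2^p * (2^(k+1) - 1),     k = q - p.
   Doubling multiplies a Stern polynomial by t, so B_n = t^p * B_(2^(k+1)-1); and the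
   Mersenne indices give the geometric sums B_(2^k - 1) = 1 + t + ... + t^(k-1).
   Hence B_n = t^p + ... + t^q, whose degree is q and whose order at 0 is p, while the
   2-adic valuation of n is p because the second factor is odd.  The inequality
   d(n) <= e(n), i.e. that Phi is well defined, holds because B_n is nonzero for n >= 1,
   which follows from B_n(1) > 0 (B_n(1) is Stern's diatomic sequence). *)

lemma stern_poly_at_1_pos: "n \<ge> 1 \<Longrightarrow> poly (stern_poly n) 1 > 0"
proof (induction n rule: less_induct)
  case (less n)
  consider "n = 1" | m where "n = 2 * m" "m \<ge> 1" | m where "n = 2 * m + 1" "m \<ge> 1"
  proof (cases "even n")
    case True
    then obtain m where "n = 2 * m" by blast
    moreover have "m \<ge> 1" using less.prems \<open>n = 2 * m\<close> by simp
    ultimately show ?thesis by (rule that(2))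
  next
    case False
    then obtain m where "n = 2 * m + 1" by (rule oddE)
    then show ?thesis using that(1,3) by (cases "m = 0") simp_all
  qed
  then show ?case
  proof cases
    case 1
    then show ?thesis by simp
  next
    case (2 m)
    then show ?thesis using less.IH[of m] by (simp add: stern_poly_even)
  next
    case (3 m)
    then show ?thesis using less.IH[of m] less.IH[of "m + 1"]
      unfolding \<open>n = 2 * m + 1\<close> stern_poly_odd[OF \<open>m \<ge> 1\<close>] by simp
  qed
qed

lemma stern_poly_nonzero: "n \<ge> 1 \<Longrightarrow> stern_poly n \<noteq> 0"
  using stern_poly_at_1_pos by fastforce

lemma stern_d_le_stern_e: "n \<ge> 1 \<Longrightarrow> stern_d n \<le> stern_e n"
  unfolding stern_d_def stern_e_def using stern_poly_nonzero order_degree by blast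

lemma stern_poly_pow2_mult:
  assumes "m \<ge> 1" shows "stern_poly (2 ^ p * m) = [:0, 1:] ^ p * stern_poly m"
proof (induction p)
  case 0
  then show ?case by simp
next
  case (Suc p)
  have "2 ^ Suc p * m = 2 * (2 ^ p * m)" by simp
  moreover have "2 ^ p * m \<ge> 1" using assms by simp
  ultimately show ?case using Suc stern_poly_even[of "2 ^ p * m"] by (simp add: mult.assoc)
qed

text \<open>At the Mersenne indices the Stern polynomial is a geometric sum:
  B (2^k - 1) = 1 + t + ... + t^(k-1), since 2^(k+1) - 1 = 2 (2^k - 1) + 1.\<close>
lemma stern_poly_mersenne: "stern_poly (2 ^ k - 1) = (\<Sum>i<k. [:0, 1:] ^ i)"
proof (induction k)
  case 0
  then show ?case by simp
next
  case (Suc k)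
  show ?case
  proof (cases "k = 0")
    case True
    then show ?thesis by simp
  next
    case False
    let ?m = "2 ^ k - 1 :: nat"
    have m_pos: "?m \<ge> 1" using False one_less_power[of "2::nat" k] by linarith
    have "2 ^ Suc k - 1 = 2 * ?m + 1" "?m + 1 = 2 ^ k * 1"
      using m_pos by simp_all
    then have "stern_poly (2 ^ Suc k - 1) = stern_poly ?m + [:0, 1:] ^ k"
      using stern_poly_odd[OF m_pos] stern_poly_pow2_mult[of 1 k] by simp
    then show ?thesis using Suc.IH by simp
  qed
qed

lemma degree_geometric_sum:
  "degree (\<Sum>i<Suc k. [:0, 1::'a::idom:] ^ i) = k"
proof (induction k)
  case 0
  then show ?case by simp
next
  case (Suc k)
  have "degree ([:0, 1::'a:] ^ Suc k) = Suc k" by (simp add: degree_power_eq)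
  then show ?case using Suc.IH by (simp add: degree_add_eq_right)
qed

lemma poly_geometric_sum_at_0: "poly (\<Sum>i<Suc k. [:0, 1::'a::idom:] ^ i) 0 = 1"
  by (simp add: poly_sum lessThan_Suc_eq_insert_0 sum.reindex)

lemma multiplicity_two_pow_times_odd:
  assumes "odd (m::nat)" shows "multiplicity 2 (2 ^ p * m) = p"
proof -
  have "m \<noteq> 0" "\<not> 2 dvd m" using assms odd_pos[OF assms] by auto
  then show ?thesis
    by (simp add: prime_elem_multiplicity_mult_distrib not_dvd_imp_multiplicity_0)
qed

lemma order_0_monom_times:
  fixes f :: "'a::idom poly"
  assumes "poly f 0 \<noteq> 0" shows "order 0 ([:0, 1:] ^ p * f) = p"
proof -
  have "f \<noteq> 0" using assms by auto
  then have "order 0 ([:0, 1:] ^ p * f) = order 0 ([:0, 1::'a:] ^ p) + order 0 f"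
    by (simp add: order_mult)
  moreover have "order 0 ([:0, 1::'a:] ^ p) = p" using order_power_n_n[of "0::'a" p] by simp
  moreover have "order 0 f = 0" using assms by (rule order_0I)
  ultimately show ?thesis by simp
qed

text \<open>The witness n = 2^p (2^(q-p+1) - 1), with B n = t^p + ... + t^q.\<close>
lemma stern_witness:
  assumes "p \<le> q"
  defines "n \<equiv> 2 ^ p * (2 ^ Suc (q - p) - 1 :: nat)"
  shows "n \<ge> 1" "nu n = p" "stern_e n = q" "stern_d n = p"
proof -
  let ?m = "2 ^ Suc (q - p) - 1 :: nat"
  let ?g = "\<Sum>i<Suc (q - p). [:0, 1::int:] ^ i"
  have m_pos: "?m \<ge> 1" using one_less_power[of "2::nat" "Suc (q - p)"] by linarith
  have B: "stern_poly n = [:0, 1:] ^ p * ?g"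
    unfolding n_def stern_poly_pow2_mult[OF m_pos] stern_poly_mersenne ..
  have g0: "poly ?g 0 \<noteq> 0" by (simp only: poly_geometric_sum_at_0)
  then have "?g \<noteq> 0" by (metis poly_0)
  show "n \<ge> 1" unfolding n_def using m_pos by simp
  show "nu n = p" unfolding nu_def n_def by (simp add: multiplicity_two_pow_times_odd)
  have "degree ([:0, 1:] ^ p * ?g) = degree ([:0, 1::int:] ^ p) + degree ?g"
    using \<open>?g \<noteq> 0\<close> by (intro degree_mult_eq) simp_all
  then show "stern_e n = q"
    unfolding stern_e_def B degree_geometric_sum using assms by (simp add: degree_power_eq)
  show "stern_d n = p" unfolding stern_d_def B using g0 by (rule order_0_monom_times)
qed

theorem mainTheorem2:
  shows "(\<forall>p q :: nat. p \<le> q \<longrightarrow> (\<exists>n::nat. n \<ge> 1 \<and> nu n = p \<and> stern_e n = q))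
       \<and> (\<forall>n::nat. n \<ge> 1 \<longrightarrow> stern_d n \<le> stern_e n)
       \<and> (\<forall>p q :: nat. p \<le> q \<longrightarrow> (\<exists>n::nat. n \<ge> 1 \<and> stern_d n = p \<and> stern_e n = q))"
proof (intro conjI allI impI)
  fix p q :: nat
  assume "p \<le> q"
  then show "\<exists>n. n \<ge> 1 \<and> nu n = p \<and> stern_e n = q"
    and "\<exists>n. n \<ge> 1 \<and> stern_d n = p \<and> stern_e n = q"
    using stern_witness by blast+
next
  show "stern_d n \<le> stern_e n" if "n \<ge> 1" for n :: nat
    using that by (rule stern_d_le_stern_e)
qed

end
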